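(* Let $G$ be a word-hyperbolic group with marked finite generating set $A$, let $X=\Gamma(G,A)$ with word metric $d_X$ and $|g|_X=d_X(1,g)$, let $H\le G$ be quasiconvex, and let $Y=\Gamma(G/H,A)$ with simplicial metric $d_Y$. Then there is an integer constant $K_1>0$ (depending only on $G,A,H$) with the following property. Let $g,f\in G$ be elements of minimal $|\cdot|_X$-length in the cosets $Hg$ and $Hf$ respectively. Let $w$ be the label (a word over $A^{\pm1}$) of a near geodesic path in $Y$ from $Hg$ to $Hf$, and let $h\in H$ be such that $hf=g\bar w$, where $\bar w\in G$ is the element represented by $w$. Then $|h|_X\le K_1$.
   Context: A marked finite generating set of $G$ is a map $\pi:A\to G$ from a finite alphabet such that $\pi(A)$ generates $G$. $\Gamma(G/H,A)$ is the graph with vertices the right cosets $Hg$ and, for each $(Hg,a)\in G/H\times A$, an edge from $Hg$ to $Hg\pi(a)$ labeled $a$; $\Gamma(G,A)$ is the case $H=1$. All edges have length one. A path $p$ in a geodesic metric space is near geodesic if $p=p_1p'p_2$ where $p_1,p',p_2$ are geodesic segments and $0\le l(p_i)\le 1$ for $i=1,2$. $H$ quasiconvex means there is $E>0$ such that every geodesic in $X$ with endpoints in $H$ lies in the $E$-neighborhood of $H$. *)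

theory Defs
  imports Complex_Main "HOL-Algebra.Algebra"
begin

text \<open>Words over the alphabet A^{+-1}: a letter is a pair (a, s) with a in A;
  s = True means a, s = False means a^{-1}.\<close>

definition words :: "'a set \<Rightarrow> ('a \<times> bool) list set" where
  "words A = {w. \<forall>x\<in>set w. fst x \<in> A}"

definition letter_val :: "('g, 'b) monoid_scheme \<Rightarrow> ('a \<Rightarrow> 'g) \<Rightarrow> 'a \<times> bool \<Rightarrow> 'g" where
  "letter_val G \<pi> x = (if snd x then \<pi> (fst x) else inv\<^bsub>G\<^esub> (\<pi> (fst x)))"

definition word_eval :: "('g, 'b) monoid_scheme \<Rightarrow> ('a \<Rightarrow> 'g) \<Rightarrow> ('a \<times> bool) list \<Rightarrow> 'g" where
  "word_eval G \<pi> w = foldr (\<lambda>x acc. letter_val G \<pi> x \<otimes>\<^bsub>G\<^esub> acc) w \<one>\<^bsub>G\<^esub>"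

definition marked_gen_set :: "('g, 'b) monoid_scheme \<Rightarrow> 'a set \<Rightarrow> ('a \<Rightarrow> 'g) \<Rightarrow> bool" where
  "marked_gen_set G A \<pi> \<longleftrightarrow> finite A \<and> \<pi> ` A \<subseteq> carrier G \<and> generate G (\<pi> ` A) = carrier G"

definition wlen :: "('g, 'b) monoid_scheme \<Rightarrow> 'a set \<Rightarrow> ('a \<Rightarrow> 'g) \<Rightarrow> 'g \<Rightarrow> nat" where
  "wlen G A \<pi> g = (LEAST n. \<exists>w\<in>words A. length w = n \<and> word_eval G \<pi> w = g)"

definition dX :: "('g, 'b) monoid_scheme \<Rightarrow> 'a set \<Rightarrow> ('a \<Rightarrow> 'g) \<Rightarrow> 'g \<Rightarrow> 'g \<Rightarrow> nat" where
  "dX G A \<pi> x y = wlen G A \<pi> (inv\<^bsub>G\<^esub> x \<otimes>\<^bsub>G\<^esub> y)"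

definition gromov_prod :: "('g, 'b) monoid_scheme \<Rightarrow> 'a set \<Rightarrow> ('a \<Rightarrow> 'g) \<Rightarrow> 'g \<Rightarrow> 'g \<Rightarrow> 'g \<Rightarrow> real" where
  "gromov_prod G A \<pi> t x y =
     (real (dX G A \<pi> x t) + real (dX G A \<pi> y t) - real (dX G A \<pi> x y)) / 2"

definition word_hyperbolic :: "('g, 'b) monoid_scheme \<Rightarrow> 'a set \<Rightarrow> ('a \<Rightarrow> 'g) \<Rightarrow> bool" where
  "word_hyperbolic G A \<pi> \<longleftrightarrow> (\<exists>\<delta>::real. \<delta> \<ge> 0 \<and>
     (\<forall>t\<in>carrier G. \<forall>x\<in>carrier G. \<forall>y\<in>carrier G. \<forall>z\<in>carrier G.
        gromov_prod G A \<pi> t x z \<ge> min (gromov_prod G A \<pi> t x y) (gromov_prod G A \<pi> t y z) - \<delta>))"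

definition quasiconvex :: "('g, 'b) monoid_scheme \<Rightarrow> 'a set \<Rightarrow> ('a \<Rightarrow> 'g) \<Rightarrow> 'g set \<Rightarrow> bool" where
  "quasiconvex G A \<pi> H \<longleftrightarrow> (\<exists>E::real. E > 0 \<and>
     (\<forall>h1\<in>H. \<forall>w\<in>words A.
        h1 \<otimes>\<^bsub>G\<^esub> word_eval G \<pi> w \<in> H \<and>
        length w = dX G A \<pi> h1 (h1 \<otimes>\<^bsub>G\<^esub> word_eval G \<pi> w) \<longrightarrow>
        (\<forall>k\<le>length w. \<exists>h\<in>H. real (dX G A \<pi> (h1 \<otimes>\<^bsub>G\<^esub> word_eval G \<pi> (take k w)) h) \<le> E)))"

text \<open>Simplicial metric of the coset graph Y = Gamma(G/H, A) on right cosets Hg.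
  The path labelled w starting at the coset C ends at C #> w-bar.\<close>
definition dY :: "('g, 'b) monoid_scheme \<Rightarrow> 'a set \<Rightarrow> ('a \<Rightarrow> 'g) \<Rightarrow> 'g set \<Rightarrow> 'g set \<Rightarrow> nat" where
  "dY G A \<pi> C D = (LEAST n. \<exists>w\<in>words A. length w = n \<and> C #>\<^bsub>G\<^esub> word_eval G \<pi> w = D)"

definition geodesic_Y :: "('g, 'b) monoid_scheme \<Rightarrow> 'a set \<Rightarrow> ('a \<Rightarrow> 'g) \<Rightarrow> 'g set \<Rightarrow> ('a \<times> bool) list \<Rightarrow> bool" where
  "geodesic_Y G A \<pi> C w \<longleftrightarrow> w \<in> words A \<and> length w = dY G A \<pi> C (C #>\<^bsub>G\<^esub> word_eval G \<pi> w)"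

definition near_geodesic_Y :: "('g, 'b) monoid_scheme \<Rightarrow> 'a set \<Rightarrow> ('a \<Rightarrow> 'g) \<Rightarrow> 'g set \<Rightarrow> ('a \<times> bool) list \<Rightarrow> bool" where
  "near_geodesic_Y G A \<pi> C w \<longleftrightarrow> (\<exists>u1 v u2. w = u1 @ v @ u2 \<and> length u1 \<le> 1 \<and> length u2 \<le> 1 \<and>
     geodesic_Y G A \<pi> C u1 \<and>
     geodesic_Y G A \<pi> (C #>\<^bsub>G\<^esub> word_eval G \<pi> u1) v \<and>
     geodesic_Y G A \<pi> (C #>\<^bsub>G\<^esub> word_eval G \<pi> (u1 @ v)) u2)"

end

theory Submission
  imports Defs
begin

text \<open>Write \<open>n = |h|\<close> and \<open>q = h f\<close>, the endpoint of the lift of \<open>w\<close> starting at \<open>g\<close>;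
  then \<open>Hq = Hf\<close>. Replacing the middle segment of the near geodesic by a detour through the
  coset \<open>H\<close> gives \<open>d(g, q) \<le> |g| + |f| + 4\<close>.
  By quasiconvexity every vertex \<open>p\<close> of a geodesic from \<open>1\<close> to \<open>h\<close> is \<open>E\<close>-close to some
  \<open>k \<in> H\<close>, and as \<open>g\<close> and \<open>f\<close> are shortest in their cosets, \<open>|g| \<le> d(g, k)\<close> and
  \<open>|f| \<le> d(q, k)\<close>: the vertex \<open>p\<close> is almost as far from \<open>g\<close> as \<open>1\<close> is, and almost as far
  from \<open>q\<close> as \<open>h\<close> is. For the vertices at distance \<open>r > E + 2\<delta>\<close> from \<open>1\<close> and from \<open>h\<close>
  the four point condition gives \<open>d(g, h) \<ge> |g| + n - r - E - 2\<delta>\<close> and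
  \<open>d(q, 1) \<ge> |f| + n - r - E - 2\<delta>\<close>, and a last application at \<open>1\<close> to \<open>g, q, h\<close> yields
  \<open>n \<le> 2r + 2E + 6\<delta> + 4\<close>.\<close>

definition gromov_product :: "('p \<Rightarrow> 'p \<Rightarrow> real) \<Rightarrow> 'p \<Rightarrow> 'p \<Rightarrow> 'p \<Rightarrow> real" where
  "gromov_product d t x y = (d x t + d y t - d x y) / 2"

locale four_point_hyperbolic =
  fixes S :: "'p set" and d :: "'p \<Rightarrow> 'p \<Rightarrow> real" and \<delta> :: real
  assumes delta_nonneg: "0 \<le> \<delta>"
    and dist_commute: "x \<in> S \<Longrightarrow> y \<in> S \<Longrightarrow> d x y = d y x"
    and four_point: "\<lbrakk>t \<in> S; x \<in> S; y \<in> S; z \<in> S\<rbrakk> \<Longrightarrow>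
      min (gromov_product d t x y) (gromov_product d t y z) - \<delta> \<le> gromov_product d t x z"
begin

lemma four_point_cases:
  assumes "t \<in> S" "x \<in> S" "y \<in> S" "z \<in> S"
  obtains "d x t + d y t - d x y - 2 * \<delta> \<le> d x t + d z t - d x z"
    | "d y t + d z t - d y z - 2 * \<delta> \<le> d x t + d z t - d x z"
proof -
  have "gromov_product d t x y - \<delta> \<le> gromov_product d t x z \<or>
      gromov_product d t y z - \<delta> \<le> gromov_product d t x z"
    using four_point[OF assms] by linarith
  then show thesis
    using that unfolding gromov_product_def by (auto simp: field_simps)
qed

text \<open>As \<open>p\<close> lies between \<open>x\<close> and \<open>y\<close>, \<open>(x|y)\<^sub>p = 0\<close>, while \<open>(x|z)\<^sub>p > \<delta>\<close>; so the four
  point condition at \<open>p\<close> forces \<open>(z|y)\<^sub>p \<le> \<delta>\<close>.\<close>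
lemma dist_ge_through_geodesic_point:
  assumes S: "x \<in> S" "y \<in> S" "z \<in> S" "p \<in> S"
    and geodesic: "d x p + d p y = d x y"
    and far: "d z x - E \<le> d z p"
    and long: "E + 2 * \<delta> < d x p"
  shows "d z p + d p y - 2 * \<delta> \<le> d z y"
proof -
  have sym: "d x z = d z x" "d y p = d p y" "d z y = d y z" using S dist_commute by auto
  from S(4,1,3,2) show ?thesis
    by (cases rule: four_point_cases) (use sym geodesic far long in linarith)+
qed

lemma dist_le_via_far_geodesic_points:
  assumes S: "b \<in> S" "h \<in> S" "g \<in> S" "q \<in> S" "p1 \<in> S" "p2 \<in> S"
    and geodesic1: "d b p1 + d p1 h = d b h"
    and geodesic2: "d h p2 + d p2 b = d h b"
    and long1: "E + 2 * \<delta> < d b p1" and long2: "E + 2 * \<delta> < d h p2"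
    and far1: "d g b - E \<le> d g p1" and far2: "d q h - E \<le> d q p2"
    and close: "d g q \<le> d b g + d h q + D"
    and "0 \<le> E" "0 \<le> D"
  shows "d b h \<le> d b p1 + d h p2 + 2 * E + 6 * \<delta> + D"
proof -
  have gh: "d g p1 + d p1 h - 2 * \<delta> \<le> d g h"
    by (rule dist_ge_through_geodesic_point) (use S geodesic1 far1 long1 in auto)
  have qb: "d q p2 + d p2 b - 2 * \<delta> \<le> d q b"
    by (rule dist_ge_through_geodesic_point) (use S geodesic2 far2 long2 in auto)
  have sym: "d b g = d g b" "d h q = d q h" "d b h = d h b" "d b q = d q b" "d q g = d g q"
    "d h g = d g h"
    using S dist_commute by auto
  from S(1,3,4,2) show ?thesis
    by (cases rule: four_point_cases)
      (use sym gh qb geodesic1 geodesic2 long1 long2 far1 far2 close delta_nonneg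
        \<open>0 \<le> E\<close> \<open>0 \<le> D\<close> in linarith)+
qed

end

definition inv_word :: "('c \<times> bool) list \<Rightarrow> ('c \<times> bool) list" where
  "inv_word w = rev (map (\<lambda>(a, s). (a, \<not> s)) w)"

lemma length_inv_word [simp]: "length (inv_word w) = length w"
  by (simp add: inv_word_def)

lemma words_Nil [simp]: "[] \<in> words A"
  by (simp add: words_def)

lemma words_Cons [simp]: "x # w \<in> words A \<longleftrightarrow> fst x \<in> A \<and> w \<in> words A"
  by (auto simp: words_def)

lemma words_append [simp]: "u @ v \<in> words A \<longleftrightarrow> u \<in> words A \<and> v \<in> words A"
  by (auto simp: words_def)

lemma take_in_words: "w \<in> words A \<Longrightarrow> take k w \<in> words A"
  by (metis append_take_drop_id words_append)

lemma drop_in_words: "w \<in> words A \<Longrightarrow> drop k w \<in> words A"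
  by (metis append_take_drop_id words_append)

lemma inv_word_in_words: "w \<in> words A \<Longrightarrow> inv_word w \<in> words A"
  by (auto simp: inv_word_def words_def)

definition quasiconvex_with :: "('g, 'b) monoid_scheme \<Rightarrow> 'a set \<Rightarrow> ('a \<Rightarrow> 'g) \<Rightarrow> 'g set \<Rightarrow> real \<Rightarrow> bool"
  where "quasiconvex_with G A \<pi> H E \<longleftrightarrow>
    (\<forall>h1\<in>H. \<forall>w\<in>words A.
        h1 \<otimes>\<^bsub>G\<^esub> word_eval G \<pi> w \<in> H \<and>
        length w = dX G A \<pi> h1 (h1 \<otimes>\<^bsub>G\<^esub> word_eval G \<pi> w) \<longrightarrow>
        (\<forall>k\<le>length w. \<exists>h\<in>H. real (dX G A \<pi> (h1 \<otimes>\<^bsub>G\<^esub> word_eval G \<pi> (take k w)) h) \<le> E))"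

lemma quasiconvex_iff_quasiconvex_with:
  "quasiconvex G A \<pi> H \<longleftrightarrow> (\<exists>E>0. quasiconvex_with G A \<pi> H E)"
  by (simp add: quasiconvex_def quasiconvex_with_def)

locale marked_group = group G for G (structure) +
  fixes A :: "'c set" and \<pi> :: "'c \<Rightarrow> 'a"
  assumes marked_gen_set: "marked_gen_set G A \<pi>"
begin

abbreviation "ev \<equiv> word_eval G \<pi>"
abbreviation "wl \<equiv> wlen G A \<pi>"
abbreviation "d \<equiv> dX G A \<pi>"

lemma generator_closed: "a \<in> A \<Longrightarrow> \<pi> a \<in> carrier G"
  using marked_gen_set unfolding marked_gen_set_def by auto

lemma letter_val_closed: "fst x \<in> A \<Longrightarrow> letter_val G \<pi> x \<in> carrier G"
  using generator_closed by (auto simp: letter_val_def)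

lemma word_eval_Nil [simp]: "ev [] = \<one>"
  by (simp add: word_eval_def)

lemma word_eval_Cons [simp]: "ev (x # w) = letter_val G \<pi> x \<otimes> ev w"
  by (simp add: word_eval_def)

lemma word_eval_closed: "w \<in> words A \<Longrightarrow> ev w \<in> carrier G"
  by (induction w) (auto simp: letter_val_closed)

lemma word_eval_append:
  "u \<in> words A \<Longrightarrow> v \<in> words A \<Longrightarrow> ev (u @ v) = ev u \<otimes> ev v"
  by (induction u) (auto simp: word_eval_closed letter_val_closed m_assoc)

lemma word_eval_inv_word: "w \<in> words A \<Longrightarrow> ev (inv_word w) = inv (ev w)"
proof (induction w)
  case Nil
  then show ?case by (simp add: inv_word_def)
next
  case (Cons x w)
  obtain a s where x: "x = (a, s)" by fastforce
  have "inv_word (x # w) = inv_word w @ [(a, \<not> s)]"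
    by (simp add: inv_word_def x)
  moreover have "ev [(a, \<not> s)] = inv (letter_val G \<pi> x)"
    using Cons.prems generator_closed by (auto simp: letter_val_def x)
  ultimately show ?case
    using Cons by (simp add: word_eval_append inv_word_in_words word_eval_closed
        letter_val_closed inv_mult_group x)
qed

lemma exists_word_eval: "x \<in> carrier G \<Longrightarrow> \<exists>w\<in>words A. ev w = x"
proof -
  assume "x \<in> carrier G"
  then have "x \<in> generate G (\<pi> ` A)"
    using marked_gen_set by (simp add: marked_gen_set_def)
  then show ?thesis
  proof (induction rule: generate.induct)
    case one
    show ?case by (intro bexI[of _ "[]"]) auto
  next
    case (incl h)
    then obtain a where "a \<in> A" "h = \<pi> a" by auto
    then show ?case
      by (intro bexI[of _ "[(a, True)]"]) (auto simp: letter_val_def generator_closed)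
  next
    case (inv h)
    then obtain a where "a \<in> A" "h = \<pi> a" by auto
    then show ?case
      by (intro bexI[of _ "[(a, False)]"]) (auto simp: letter_val_def generator_closed)
  next
    case (eng h1 h2)
    then obtain u v where "u \<in> words A" "v \<in> words A" "ev u = h1" "ev v = h2" by auto
    then show ?case by (intro bexI[of _ "u @ v"]) (auto simp: word_eval_append)
  qed
qed

lemma wlen_le_length: "w \<in> words A \<Longrightarrow> wl (ev w) \<le> length w"
  unfolding wlen_def by (rule Least_le) blast

lemma exists_geodesic_word:
  assumes "x \<in> carrier G"
  obtains w where "w \<in> words A" "length w = wl x" "ev w = x"
proof -
  have "\<exists>n. \<exists>w\<in>words A. length w = n \<and> ev w = x"
    using exists_word_eval[OF assms] by blast
  then have "\<exists>w\<in>words A. length w = wl x \<and> ev w = x"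
    unfolding wlen_def by (rule LeastI_ex)
  then show ?thesis using that by blast
qed

lemma wlen_mult_le:
  assumes "x \<in> carrier G" "y \<in> carrier G"
  shows "wl (x \<otimes> y) \<le> wl x + wl y"
proof -
  obtain u v where "u \<in> words A" "length u = wl x" "ev u = x"
    and "v \<in> words A" "length v = wl y" "ev v = y"
    using exists_geodesic_word assms by metis
  then show ?thesis
    using wlen_le_length[of "u @ v"] by (simp add: word_eval_append)
qed

lemma wlen_inv_le: "x \<in> carrier G \<Longrightarrow> wl (inv x) \<le> wl x"
  by (metis exists_geodesic_word inv_word_in_words length_inv_word wlen_le_length
      word_eval_inv_word)

lemma wlen_inv: "x \<in> carrier G \<Longrightarrow> wl (inv x) = wl x"
  using wlen_inv_le[of x] wlen_inv_le[of "inv x"] by simp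

lemma mult_inv_cancel_left: "x \<in> carrier G \<Longrightarrow> y \<in> carrier G \<Longrightarrow> x \<otimes> (inv x \<otimes> y) = y"
  by (simp add: m_assoc[symmetric])

lemma dX_commute: "x \<in> carrier G \<Longrightarrow> y \<in> carrier G \<Longrightarrow> d x y = d y x"
  unfolding dX_def by (metis inv_closed inv_mult_group inv_inv m_closed wlen_inv)

lemma dX_triangle:
  assumes "x \<in> carrier G" "y \<in> carrier G" "z \<in> carrier G"
  shows "d x z \<le> d x y + d y z"
proof -
  have "inv x \<otimes> z = (inv x \<otimes> y) \<otimes> (inv y \<otimes> z)"
    using assms by (metis inv_closed m_assoc m_closed r_inv r_one)
  then show ?thesis
    unfolding dX_def using assms by (simp add: wlen_mult_le)
qed

lemma dX_one: "x \<in> carrier G \<Longrightarrow> d \<one> x = wl x"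
  by (simp add: dX_def)

lemma dX_one_right: "x \<in> carrier G \<Longrightarrow> d x \<one> = wl x"
  using dX_commute[of x \<one>] by (simp add: dX_one)

lemma dX_mult_right: "x \<in> carrier G \<Longrightarrow> y \<in> carrier G \<Longrightarrow> d x (x \<otimes> y) = wl y"
  by (simp add: dX_def m_assoc[symmetric])

lemma dX_geodesic_prefix:
  assumes w: "w \<in> words A" "length w = wl (ev w)" and k: "k \<le> length w"
  shows "d \<one> (ev (take k w)) = k" "d (ev (take k w)) (ev w) = length w - k"
proof -
  have words: "take k w \<in> words A" "drop k w \<in> words A"
    using w(1) by (simp_all add: take_in_words drop_in_words)
  then have closed: "ev (take k w) \<in> carrier G" "ev (drop k w) \<in> carrier G"
    by (simp_all add: word_eval_closed)
  have split: "ev w = ev (take k w) \<otimes> ev (drop k w)"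
    using words word_eval_append by (metis append_take_drop_id)
  have "d \<one> (ev (take k w)) \<le> k"
    using dX_one[OF closed(1)] wlen_le_length[OF words(1)] k by simp
  moreover have "d (ev (take k w)) (ev w) \<le> length w - k"
    using dX_mult_right[OF closed] wlen_le_length[OF words(2)] split by simp
  moreover have "length w \<le> d \<one> (ev (take k w)) + d (ev (take k w)) (ev w)"
    using dX_triangle[of \<one> "ev (take k w)" "ev w"] closed w dX_one word_eval_closed by simp
  ultimately show "d \<one> (ev (take k w)) = k" "d (ev (take k w)) (ev w) = length w - k"
    using k by linarith+
qed

lemma word_hyperbolic_iff:
  "word_hyperbolic G A \<pi> \<longleftrightarrow> (\<exists>\<delta>. four_point_hyperbolic (carrier G) (\<lambda>x y. real (d x y)) \<delta>)"
proof -
  have "gromov_prod G A \<pi> = gromov_product (\<lambda>x y. real (d x y))"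
    by (simp add: fun_eq_iff gromov_prod_def gromov_product_def)
  then have "four_point_hyperbolic (carrier G) (\<lambda>x y. real (d x y)) \<delta> \<longleftrightarrow>
      0 \<le> \<delta> \<and> (\<forall>t\<in>carrier G. \<forall>x\<in>carrier G. \<forall>y\<in>carrier G. \<forall>z\<in>carrier G.
        min (gromov_prod G A \<pi> t x y) (gromov_prod G A \<pi> t y z) - \<delta> \<le> gromov_prod G A \<pi> t x z)"
    for \<delta>
    unfolding four_point_hyperbolic_def Ball_def by (simp add: dX_commute)
  then show ?thesis
    unfolding word_hyperbolic_def by simp
qed

text \<open>The middle segment of a near geodesic from \<open>Hg\<close> to \<open>Hf\<close> is no longer than the detour
  that backtracks its first letter, runs from \<open>Hg\<close> to \<open>H\<close> along a geodesic word for
  \<open>g\<inverse>\<close>, then to \<open>Hf\<close> along one for \<open>f\<close>, and backtracks the last letter.\<close>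
lemma near_geodesic_length_le:
  assumes H: "subgroup H G" and g: "g \<in> carrier G" and f: "f \<in> carrier G"
    and near: "near_geodesic_Y G A \<pi> (H #> g) w"
    and ends: "(H #> g) #> ev w = H #> f"
  shows "w \<in> words A" "length w \<le> wl g + wl f + 4"
proof -
  have Hc: "H \<subseteq> carrier G" using subgroup.subset[OF H] .
  obtain u1 v u2 where w: "w = u1 @ v @ u2" and short: "length u1 \<le> 1" "length u2 \<le> 1"
    and geo1: "geodesic_Y G A \<pi> (H #> g) u1"
    and geo: "geodesic_Y G A \<pi> ((H #> g) #> ev u1) v"
    and geo2: "geodesic_Y G A \<pi> ((H #> g) #> ev (u1 @ v)) u2"
    using near unfolding near_geodesic_Y_def by blast
  have words: "u1 \<in> words A" "v \<in> words A" "u2 \<in> words A"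
    using geo1 geo geo2 unfolding geodesic_Y_def by auto
  then show "w \<in> words A" using w by simp
  have closed: "ev u1 \<in> carrier G" "ev v \<in> carrier G" "ev u2 \<in> carrier G"
    using words word_eval_closed by auto
  obtain wg where wg: "wg \<in> words A" "length wg = wl (inv g)" "ev wg = inv g"
    using exists_geodesic_word inv_closed[OF g] by blast
  obtain wf where wf: "wf \<in> words A" "length wf = wl f" "ev wf = f"
    using exists_geodesic_word f by blast
  define detour where "detour = inv_word u1 @ wg @ wf @ inv_word u2"
  have detour_words: "detour \<in> words A"
    using words wg wf by (simp add: detour_def inv_word_in_words)
  have "ev detour = inv (ev u1) \<otimes> (inv g \<otimes> (f \<otimes> inv (ev u2)))"
    using words wg wf by (simp add: detour_def word_eval_append inv_word_in_words word_eval_inv_word)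
  then have "g \<otimes> ev u1 \<otimes> ev detour = f \<otimes> inv (ev u2)"
    using g f closed by (simp add: m_assoc mult_inv_cancel_left)
  then have detour_end: "((H #> g) #> ev u1) #> ev detour = H #> (f \<otimes> inv (ev u2))"
    using Hc g closed detour_words by (simp add: coset_mult_assoc word_eval_closed)
  have "g \<otimes> ev u1 \<otimes> ev v = g \<otimes> ev w \<otimes> inv (ev u2)"
    using g closed words w by (simp add: word_eval_append m_assoc)
  then have "((H #> g) #> ev u1) #> ev v = ((H #> g) #> ev w) #> inv (ev u2)"
    using Hc g closed words w by (simp add: coset_mult_assoc word_eval_closed)
  also have "\<dots> = H #> (f \<otimes> inv (ev u2))"
    using Hc f closed by (simp add: ends coset_mult_assoc)
  finally have "length v \<le> length detour"
    using geo detour_end detour_words unfolding geodesic_Y_def dY_def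
    by (auto intro: Least_le)
  also have "\<dots> \<le> wl g + wl f + 2"
    using short wg wf g by (simp add: detour_def wlen_inv)
  finally show "length w \<le> wl g + wl f + 4"
    using w short by simp
qed

lemma near_geodesic_endpoint_dX_le:
  assumes "subgroup H G" "g \<in> carrier G" "f \<in> carrier G"
    and "near_geodesic_Y G A \<pi> (H #> g) w"
    and "(H #> g) #> ev w = H #> f"
  shows "d g (g \<otimes> ev w) \<le> wl g + wl f + 4"
proof -
  have "w \<in> words A" "length w \<le> wl g + wl f + 4"
    using near_geodesic_length_le[OF assms] by auto
  then show ?thesis
    using dX_mult_right[OF assms(2) word_eval_closed] wlen_le_length by fastforce
qed

lemma quasiconvex_with_geodesic_prefix:
  assumes H: "subgroup H G" and qc: "quasiconvex_with G A \<pi> H E" and h: "h \<in> H"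
    and w: "w \<in> words A" "length w = wl h" "ev w = h" and k: "k \<le> length w"
  shows "\<exists>x\<in>H. real (d (ev (take k w)) x) \<le> E"
proof -
  have "\<one> \<otimes> ev w \<in> H \<and> length w = d \<one> (\<one> \<otimes> ev w)"
    using w h subgroup.mem_carrier[OF H h] by (simp add: dX_one)
  then have "\<exists>x\<in>H. real (d (\<one> \<otimes> ev (take k w)) x) \<le> E"
    using qc subgroup.one_closed[OF H] w(1) k unfolding quasiconvex_with_def by blast
  then show ?thesis
    using w(1) by (simp add: take_in_words word_eval_closed)
qed

lemma shortest_coset_rep_le_dX:
  assumes H: "subgroup H G" and x: "x \<in> carrier G" and p: "p \<in> carrier G" and k: "k \<in> H"
    and shortest: "\<forall>y\<in>H #> x. m \<le> wl y"
  shows "m \<le> d x p + d p k"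
proof -
  have kc: "k \<in> carrier G" using subgroup.mem_carrier[OF H k] .
  have "inv k \<otimes> x \<in> H #> x"
    using H k x by (intro rcosI) (auto simp: subgroup.m_inv_closed subgroup.subset)
  then have "m \<le> d k x"
    using shortest by (simp add: dX_def)
  also have "\<dots> \<le> d k p + d p x" using dX_triangle[OF kc p x] .
  finally show ?thesis using dX_commute kc p x by simp
qed

lemma geodesic_prefix_far_from_shortest_rep:
  assumes H: "subgroup H G" and qc: "quasiconvex_with G A \<pi> H E" and h: "h \<in> H"
    and w: "w \<in> words A" "length w = wl h" "ev w = h" and k: "k \<le> length w"
    and x: "x \<in> carrier G" and shortest: "\<forall>y\<in>H #> x. m \<le> wl y"
  shows "real m - E \<le> real (d x (ev (take k w)))"
proof -
  have p: "ev (take k w) \<in> carrier G"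
    using w(1) by (simp add: take_in_words word_eval_closed)
  obtain z where "z \<in> H" "real (d (ev (take k w)) z) \<le> E"
    using quasiconvex_with_geodesic_prefix[OF H qc h w k] by blast
  moreover have "m \<le> d x (ev (take k w)) + d (ev (take k w)) z"
    using shortest_coset_rep_le_dX[OF H x p \<open>z \<in> H\<close> shortest] .
  ultimately show ?thesis by linarith
qed

lemma shortest_coset_reps_bound:
  assumes hyperbolic: "four_point_hyperbolic (carrier G) (\<lambda>x y. real (d x y)) \<delta>"
    and H: "subgroup H G" and qc: "quasiconvex_with G A \<pi> H E" and "0 \<le> E"
    and g: "g \<in> carrier G" and f: "f \<in> carrier G" and h: "h \<in> H"
    and shortest_g: "\<forall>x\<in>H #> g. wl g \<le> wl x"
    and shortest_f: "\<forall>x\<in>H #> f. wl f \<le> wl x"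
    and close: "d g (h \<otimes> f) \<le> wl g + wl f + 4"
    and r: "E + 2 * \<delta> < real r"
  shows "real (wl h) \<le> 2 * real r + 2 * E + 6 * \<delta> + 4"
proof -
  interpret four_point_hyperbolic "carrier G" "\<lambda>x y. real (d x y)" \<delta> by fact
  have hc: "h \<in> carrier G" using subgroup.mem_carrier[OF H h] .
  define q where "q = h \<otimes> f"
  have qc': "q \<in> carrier G" using hc f by (simp add: q_def)
  have shortest_q: "\<forall>x\<in>H #> q. wl f \<le> wl x"
    using shortest_f H hc f h
    by (simp add: q_def coset_mult_assoc[symmetric] coset_join2 subgroup.subset)
  obtain wh where wh: "wh \<in> words A" "length wh = wl h" "ev wh = h"
    using exists_geodesic_word hc by blast
  show ?thesis
  proof (cases "r \<le> wl h")
    case False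
    then show ?thesis using r delta_nonneg \<open>0 \<le> E\<close> by linarith
  next
    case True
    define p1 where "p1 = ev (take r wh)"
    define p2 where "p2 = ev (take (wl h - r) wh)"
    have pc: "p1 \<in> carrier G" "p2 \<in> carrier G"
      using wh(1) by (simp_all add: p1_def p2_def take_in_words word_eval_closed)
    have p1_dist: "d \<one> p1 = r" "d p1 h = wl h - r"
      using dX_geodesic_prefix[of wh r] wh True by (simp_all add: p1_def)
    have "d \<one> p2 = wl h - r" "d p2 h = r"
      using dX_geodesic_prefix[of wh "wl h - r"] wh True by (simp_all add: p2_def)
    then have p2_dist: "d p2 \<one> = wl h - r" "d h p2 = r"
      using dX_commute[OF pc(2) one_closed] dX_commute[OF hc pc(2)] by simp_all
    have far1: "real (wl g) - E \<le> real (d g p1)"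
      using geodesic_prefix_far_from_shortest_rep[OF H qc h wh _ g shortest_g] True wh(2)
      by (simp add: p1_def)
    have far2: "real (wl f) - E \<le> real (d q p2)"
      using geodesic_prefix_far_from_shortest_rep[OF H qc h wh _ qc' shortest_q] wh(2)
      by (simp add: p2_def)
    have "real (d \<one> h) \<le> real (d \<one> p1) + real (d h p2) + 2 * E + 6 * \<delta> + 4"
    proof (rule dist_le_via_far_geodesic_points)
      show "real (d \<one> p1) + real (d p1 h) = real (d \<one> h)"
        using p1_dist True hc by (simp add: dX_one)
      show "real (d h p2) + real (d p2 \<one>) = real (d h \<one>)"
        using p2_dist True hc by (simp add: dX_one_right)
      show "real (d g \<one>) - E \<le> real (d g p1)"
        using far1 g by (simp add: dX_one_right)
      show "real (d q h) - E \<le> real (d q p2)"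
        using far2 hc f by (simp add: dX_commute q_def dX_mult_right)
      show "real (d g q) \<le> real (d \<one> g) + real (d h q) + 4"
        using close g hc f by (simp add: q_def dX_one dX_mult_right)
    qed (use g hc qc' pc r p1_dist p2_dist \<open>0 \<le> E\<close> in simp_all)
    then show ?thesis
      using p1_dist p2_dist hc by (simp add: dX_one)
  qed
qed

end

theorem lemma3p3:
  fixes G :: "('g, 'b) monoid_scheme" and A :: "'a set" and \<pi> :: "'a \<Rightarrow> 'g" and H :: "'g set"
  assumes "group G"
    and "marked_gen_set G A \<pi>"
    and "word_hyperbolic G A \<pi>"
    and "subgroup H G"
    and "quasiconvex G A \<pi> H"
  shows "\<exists>K1::nat. K1 > 0 \<and>
    (\<forall>g\<in>carrier G. \<forall>f\<in>carrier G. \<forall>w. \<forall>h\<in>H.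
       (\<forall>x\<in>H #>\<^bsub>G\<^esub> g. wlen G A \<pi> g \<le> wlen G A \<pi> x) \<longrightarrow>
       (\<forall>x\<in>H #>\<^bsub>G\<^esub> f. wlen G A \<pi> f \<le> wlen G A \<pi> x) \<longrightarrow>
       near_geodesic_Y G A \<pi> (H #>\<^bsub>G\<^esub> g) w \<longrightarrow>
       (H #>\<^bsub>G\<^esub> g) #>\<^bsub>G\<^esub> word_eval G \<pi> w = H #>\<^bsub>G\<^esub> f \<longrightarrow>
       h \<otimes>\<^bsub>G\<^esub> f = g \<otimes>\<^bsub>G\<^esub> word_eval G \<pi> w \<longrightarrow>
       wlen G A \<pi> h \<le> K1)"
proof -
  interpret marked_group G A \<pi>
    using assms(1,2) by (simp add: marked_group_def marked_group_axioms_def)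
  obtain \<delta> where hyperbolic: "four_point_hyperbolic (carrier G) (\<lambda>x y. real (d x y)) \<delta>"
    using assms(3) word_hyperbolic_iff by blast
  obtain E where "E > 0" and qc: "quasiconvex_with G A \<pi> H E"
    using assms(5) quasiconvex_iff_quasiconvex_with by blast
  define r where "r = nat \<lceil>E + 2 * \<delta>\<rceil> + 1"
  have r: "E + 2 * \<delta> < real r" unfolding r_def by linarith
  define K where "K = nat \<lceil>2 * real r + 2 * E + 6 * \<delta> + 4\<rceil>"
  have "0 \<le> \<delta>" using four_point_hyperbolic.delta_nonneg[OF hyperbolic] .
  show ?thesis
  proof (intro exI[of _ K] conjI ballI allI impI)
    show "0 < K" unfolding K_def using \<open>E > 0\<close> \<open>0 \<le> \<delta>\<close> by linarith
  next
    fix g f w h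
    assume g: "g \<in> carrier G" and f: "f \<in> carrier G" and h: "h \<in> H"
      and shortest_g: "\<forall>x\<in>H #>\<^bsub>G\<^esub> g. wl g \<le> wl x"
      and shortest_f: "\<forall>x\<in>H #>\<^bsub>G\<^esub> f. wl f \<le> wl x"
      and near: "near_geodesic_Y G A \<pi> (H #>\<^bsub>G\<^esub> g) w"
      and ends: "(H #>\<^bsub>G\<^esub> g) #>\<^bsub>G\<^esub> ev w = H #>\<^bsub>G\<^esub> f"
      and hf: "h \<otimes>\<^bsub>G\<^esub> f = g \<otimes>\<^bsub>G\<^esub> ev w"
    have "d g (h \<otimes>\<^bsub>G\<^esub> f) \<le> wl g + wl f + 4"
      using near_geodesic_endpoint_dX_le[OF assms(4) g f near ends] hf by simp
    then have "real (wl h) \<le> 2 * real r + 2 * E + 6 * \<delta> + 4"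
      using shortest_coset_reps_bound[OF hyperbolic assms(4) qc _ g f h shortest_g shortest_f _ r]
        \<open>E > 0\<close> by simp
    then show "wl h \<le> K" unfolding K_def by linarith
  qed
qed

end
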